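(* For every instance of a combinatorial optimization problem (constrained or unconstrained), with $m$ the number of distinct cost values over the feasible solutions, the dynamical Lie algebra of QWOA satisfies $$\dim(\mathfrak g_{\mathrm{QWOA}})\le m^2+1 .$$
   Context: An instance of a combinatorial optimization problem consists of a finite nonempty set $\mathcal S'$ of feasible solutions and a cost function $C:\mathcal S'\to\mathbb R$ (for an unconstrained problem, $\mathcal S'$ is the whole solution space). Let $N=|\mathcal S'|$ and let $m=|C(\mathcal S')|$ be the number of distinct cost values over the feasible solutions. Work in $\mathbb C^N$ with orthonormal basis $\{|z\rangle : z\in\mathcal S'\}$ (for constrained problems this is the indexed feasible subspace, obtained from the full space by a fixed change of basis). The problem Hamiltonian is the diagonal matrix $H_C$ with $H_C|z\rangle=C(z)|z\rangle$. The mixing Hamiltonian is the $N\times N$ all-ones matrix $H_M=J$; it differs from the adjacency matrix of the complete graph $K_N$ by the identity matrix, so it generates the same QWOA mixing unitaries $e^{-itH_M}$ up to a global phase. The dynamical Lie algebra (DLA) of QWOA, $\mathfrak g_{\mathrm{QWOA}}$, is the real Lie algebra generated by $iH_C$ and $iH_M$, i.e. the smallest real linear subspace of the $N\times N$ complex matrices that contains $iH_C$ and $iH_M$ and is closed under the commutator $[A,B]=AB-BA$; its dimension is its dimension as a real vector space. *)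

theory Defs
  imports "HOL-Analysis.Analysis"
begin

text \<open>Solutions are indexed by a finite (nonempty) type 'a, standing for the feasible set S'.
 N x N complex matrices are complex^'a^'a, regarded as a real vector space.\<close>

definition cost_ham :: "('a::finite \<Rightarrow> real) \<Rightarrow> complex^'a^'a" where
  "cost_ham C = (\<chi> i j. if i = j then complex_of_real (C i) else 0)"

definition mixer_ham :: "complex^'a::finite^'a" where
  "mixer_ham = (\<chi> i j. 1)"

definition cmat_scale :: "complex \<Rightarrow> complex^'a::finite^'a \<Rightarrow> complex^'a^'a" where
  "cmat_scale c A = (\<chi> i j. c * A $ i $ j)"

definition commutator :: "complex^'a::finite^'a \<Rightarrow> complex^'a^'a \<Rightarrow> complex^'a^'a" where
  "commutator A B = A ** B - B ** A"

definition lie_closed :: "(complex^'a::finite^'a) set \<Rightarrow> bool" where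
  "lie_closed L \<longleftrightarrow> (\<forall>A\<in>L. \<forall>B\<in>L. commutator A B \<in> L)"

definition gen_real_lie_alg :: "(complex^'a::finite^'a) set \<Rightarrow> (complex^'a^'a) set" where
  "gen_real_lie_alg G = \<Inter>{L. G \<subseteq> L \<and> subspace L \<and> lie_closed L}"

definition qwoa_dla :: "('a::finite \<Rightarrow> real) \<Rightarrow> (complex^'a^'a) set" where
  "qwoa_dla C = gen_real_lie_alg {cmat_scale \<i> (cost_ham C), cmat_scale \<i> mixer_ham}"

end

theory Submission
  imports Defs
begin

(* Call a matrix a level matrix if its (i, j) entry depends only on the cost values C i and C j,
   up to an extra diagonal term depending only on C i; both H_C and J are of this form.  Level
   matrices are closed under products, and in a commutator the extra diagonal terms cancel.
   Hence the anti-Hermitian level matrices whose extra diagonal is a real multiple of i H_C form a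
   real Lie algebra containing i H_C and i J.  Modulo the line through i H_C, they are anti-Hermitian
   matrices constant on the blocks of equal cost; such a matrix is determined by an anti-Hermitian
   m x m matrix, so these span a real space of dimension at most m^2. *)

definition antihermitian :: "complex^'a::finite^'a \<Rightarrow> bool" where
  "antihermitian A \<longleftrightarrow> (\<forall>i j. cnj (A$i$j) = - A$j$i)"

lemma subspace_antihermitian: "subspace {A :: complex^'a::finite^'a. antihermitian A}"
  unfolding subspace_def antihermitian_def by (simp add: scaleR_conv_of_real[symmetric])

lemma antihermitian_cnj_mult:
  assumes "antihermitian A" "antihermitian B"
  shows "cnj ((A ** B)$i$j) = (B ** A)$j$i"
  using assms by (simp add: antihermitian_def matrix_matrix_mult_def mult.commute)

lemma antihermitian_commutator:
  assumes "antihermitian A" "antihermitian B"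
  shows "antihermitian (commutator A B)"
  unfolding antihermitian_def commutator_def
  by (simp add: antihermitian_cnj_mult[OF assms] antihermitian_cnj_mult[OF assms(2,1)])

lemma gen_real_lie_alg_least:
  assumes "G \<subseteq> L" "subspace L" "lie_closed L"
  shows "gen_real_lie_alg G \<subseteq> L"
  unfolding gen_real_lie_alg_def using assms by (simp add: Inter_lower)

definition level_matrix ::
    "('a::finite \<Rightarrow> real) \<Rightarrow> (real \<times> real \<Rightarrow> complex) \<Rightarrow> (real \<Rightarrow> complex) \<Rightarrow> complex^'a^'a" where
  "level_matrix C f d = (\<chi> i j. f (C i, C j) + (if i = j then d (C i) else 0))"

lemma level_matrix_cong:
  "(\<And>p. p \<in> range C \<times> range C \<Longrightarrow> f p = g p) \<Longrightarrow> level_matrix C f d = level_matrix C g d"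
  by (simp add: level_matrix_def)

lemma level_matrix_add:
  "level_matrix C f d + level_matrix C g e = level_matrix C (\<lambda>p. f p + g p) (\<lambda>x. d x + e x)"
  by (simp add: vec_eq_iff level_matrix_def)

lemma level_matrix_diff:
  "level_matrix C f d - level_matrix C g e = level_matrix C (\<lambda>p. f p - g p) (\<lambda>x. d x - e x)"
  by (simp add: vec_eq_iff level_matrix_def)

lemma cmat_scale_level_matrix:
  "cmat_scale c (level_matrix C f d) = level_matrix C (\<lambda>p. c * f p) (\<lambda>x. c * d x)"
  by (simp add: vec_eq_iff cmat_scale_def level_matrix_def distrib_left)

lemma scaleR_level_matrix:
  "r *\<^sub>R level_matrix C f d = level_matrix C (\<lambda>p. of_real r * f p) (\<lambda>x. of_real r * d x)"
  by (simp add: vec_eq_iff level_matrix_def scaleR_conv_of_real[symmetric] scaleR_add_right)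

lemma level_matrix_mult:
  "level_matrix C f d ** level_matrix C g e =
     level_matrix C (\<lambda>(x, y). (\<Sum>k\<in>UNIV. f (x, C k) * g (C k, y)) + f (x, y) * e y + d x * g (x, y))
       (\<lambda>x. d x * e x)"
  by (simp add: vec_eq_iff matrix_matrix_mult_def level_matrix_def algebra_simps sum.distrib
      if_distrib[of "\<lambda>t. t * _"] if_distrib[of "\<lambda>t. _ * t"] cong: if_cong)

lemma commutator_level_matrix:
  "\<exists>h. commutator (level_matrix C f d) (level_matrix C g e) = level_matrix C h (\<lambda>_. 0)"
  by (auto simp: commutator_def level_matrix_mult level_matrix_diff mult.commute)

lemma cost_ham_level_matrix: "cost_ham C = level_matrix C (\<lambda>_. 0) of_real"
  by (simp add: vec_eq_iff cost_ham_def level_matrix_def)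

lemma mixer_ham_level_matrix: "mixer_ham = level_matrix C (\<lambda>_. 1) (\<lambda>_. 0)"
  by (simp add: vec_eq_iff mixer_ham_def level_matrix_def)

definition level_unit :: "('a::finite \<Rightarrow> real) \<Rightarrow> real \<times> real \<Rightarrow> complex^'a^'a" where
  "level_unit C p = (\<chi> i j. if p = (C i, C j) then 1 else 0)"

lemma level_matrix_expansion:
  "level_matrix C f (\<lambda>_. 0) = (\<Sum>p \<in> range C \<times> range C. cmat_scale (f p) (level_unit C p))"
  by (simp add: vec_eq_iff level_matrix_def level_unit_def cmat_scale_def
      if_distrib[of "\<lambda>t. _ * t"] cong: if_cong)

lemma re_im_combination:
  "Re z *\<^sub>R (M - N) + Im z *\<^sub>R cmat_scale \<i> (M + N) = cmat_scale z M - cmat_scale (cnj z) N"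
  by (simp add: vec_eq_iff cmat_scale_def complex_eq_iff algebra_simps)

definition level_basis :: "('a::finite \<Rightarrow> real) \<Rightarrow> real \<times> real \<Rightarrow> complex^'a^'a" where
  "level_basis C p =
     (if fst p < snd p then level_unit C p - level_unit C (prod.swap p)
      else cmat_scale \<i> (level_unit C p + level_unit C (prod.swap p)))"

lemma re_im_combination_in_span:
  assumes "p \<in> range C \<times> range C"
  shows "Re z *\<^sub>R (level_unit C p - level_unit C (prod.swap p))
           + Im z *\<^sub>R cmat_scale \<i> (level_unit C p + level_unit C (prod.swap p))
         \<in> span (level_basis C ` (range C \<times> range C))"
    (is "_ *\<^sub>R ?antisym + _ *\<^sub>R ?sym \<in> span ?B")
proof -
  have swap_in: "prod.swap p \<in> range C \<times> range C"
    using assms by auto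
  have "?antisym \<in> span ?B \<and> ?sym \<in> span ?B"
  proof (cases rule: linorder_cases[of "fst p" "snd p"])
    case less
    then have "?antisym = level_basis C p" "?sym = level_basis C (prod.swap p)"
      by (simp_all add: level_basis_def add.commute)
    then show ?thesis
      using assms swap_in by (simp add: span_base)
  next
    case equal
    then have "prod.swap p = p"
      by (simp add: prod_eq_iff)
    then have "?antisym = 0" "?sym = level_basis C p"
      using equal by (simp_all add: level_basis_def)
    then show ?thesis
      using assms by (simp add: span_base span_zero)
  next
    case greater
    then have "?antisym = - level_basis C (prod.swap p)" "?sym = level_basis C p"
      by (simp_all add: level_basis_def)
    then show ?thesis
      using assms swap_in by (simp add: span_base span_neg)
  qed
  then show ?thesis
    by (simp add: span_add span_scale)
qed

lemma antihermitian_block_in_span: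
  assumes "antihermitian (level_matrix C f (\<lambda>_. 0))"
  shows "level_matrix C f (\<lambda>_. 0) \<in> span (level_basis C ` (range C \<times> range C))"
proof -
  let ?P = "range C \<times> range C"
  \<comment> \<open>With c = f/2 anti-Hermiticity reads f = c - cnj (c o swap), and each pair p of levels
    contributes c p and - cnj (c p) through a real combination of two basis matrices.\<close>
  define c where "c p = f p / 2" for p
  have "f p = c p - cnj (c (prod.swap p))" if p: "p \<in> ?P" for p
  proof -
    obtain i j where "p = (C i, C j)"
      using p by force
    moreover have "cnj (level_matrix C f (\<lambda>_. 0) $ j $ i) = - level_matrix C f (\<lambda>_. 0) $ i $ j"
      using assms by (simp add: antihermitian_def)
    ultimately show ?thesis
      by (simp add: c_def level_matrix_def)
  qed
  then have "level_matrix C f (\<lambda>_. 0)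
      = level_matrix C c (\<lambda>_. 0) - level_matrix C (\<lambda>p. cnj (c (prod.swap p))) (\<lambda>_. 0)"
    unfolding level_matrix_diff diff_0_right by (rule level_matrix_cong)
  also have "\<dots> = (\<Sum>p \<in> ?P. cmat_scale (c p) (level_unit C p))
      - (\<Sum>p \<in> ?P. cmat_scale (cnj (c p)) (level_unit C (prod.swap p)))"
    unfolding level_matrix_expansion
    by (simp, rule sum.reindex_bij_witness[where i = prod.swap and j = prod.swap]) auto
  also have "\<dots> = (\<Sum>p \<in> ?P. Re (c p) *\<^sub>R (level_unit C p - level_unit C (prod.swap p))
      + Im (c p) *\<^sub>R cmat_scale \<i> (level_unit C p + level_unit C (prod.swap p)))"
    by (simp add: re_im_combination sum_subtractf)
  finally show ?thesis
    by (simp add: span_sum re_im_combination_in_span)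
qed

definition qwoa_envelope :: "('a::finite \<Rightarrow> real) \<Rightarrow> (complex^'a^'a) set" where
  "qwoa_envelope C = {A. antihermitian A}
     \<inter> {level_matrix C f (\<lambda>x. \<i> * of_real (a * x)) | f a. True}"

lemma subspace_qwoa_envelope: "subspace (qwoa_envelope C)"
  unfolding qwoa_envelope_def
proof (intro subspace_inter subspace_antihermitian)
  show "subspace {level_matrix C f (\<lambda>x. \<i> * of_real (a * x)) | f a. True}"
    unfolding subspace_def
  proof (safe; (intro exI conjI TrueI)?)
    show "0 = level_matrix C (\<lambda>_. 0) (\<lambda>x. \<i> * of_real (0 * x))"
      by (simp add: vec_eq_iff level_matrix_def)
  next
    fix f g a b
    show "level_matrix C f (\<lambda>x. \<i> * of_real (a * x)) + level_matrix C g (\<lambda>x. \<i> * of_real (b * x))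
        = level_matrix C (\<lambda>p. f p + g p) (\<lambda>x. \<i> * of_real ((a + b) * x))"
      by (simp add: level_matrix_add algebra_simps)
  next
    fix r :: real and f a
    show "r *\<^sub>R level_matrix C f (\<lambda>x. \<i> * of_real (a * x))
        = level_matrix C (\<lambda>p. of_real r * f p) (\<lambda>x. \<i> * of_real ((r * a) * x))"
      by (simp add: scaleR_level_matrix algebra_simps)
  qed
qed

lemma lie_closed_qwoa_envelope: "lie_closed (qwoa_envelope C)"
  unfolding lie_closed_def
proof safe
  fix A B assume "A \<in> qwoa_envelope C" "B \<in> qwoa_envelope C"
  then obtain f a g b where
    "antihermitian A" "A = level_matrix C f (\<lambda>x. \<i> * of_real (a * x))"
    "antihermitian B" "B = level_matrix C g (\<lambda>x. \<i> * of_real (b * x))"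
    unfolding qwoa_envelope_def by blast
  moreover obtain h where "commutator A B = level_matrix C h (\<lambda>_. 0)"
    using commutator_level_matrix calculation(2,4) by blast
  then have "commutator A B = level_matrix C h (\<lambda>x. \<i> * of_real (0 * x))"
    by simp
  ultimately show "commutator A B \<in> qwoa_envelope C"
    unfolding qwoa_envelope_def by (blast intro: antihermitian_commutator)
qed

lemma antihermitian_i_cost_ham: "antihermitian (cmat_scale \<i> (cost_ham C))"
  by (simp add: antihermitian_def cmat_scale_def cost_ham_def)

lemma generators_in_qwoa_envelope:
  "{cmat_scale \<i> (cost_ham C), cmat_scale \<i> mixer_ham} \<subseteq> qwoa_envelope C"
proof -
  have "cmat_scale \<i> (cost_ham C) = level_matrix C (\<lambda>_. 0) (\<lambda>x. \<i> * of_real (1 * x))"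
    "cmat_scale \<i> mixer_ham = level_matrix C (\<lambda>_. \<i>) (\<lambda>x. \<i> * of_real (0 * x))"
    by (simp_all add: cost_ham_level_matrix mixer_ham_level_matrix[of C] cmat_scale_level_matrix)
  moreover have "antihermitian (cmat_scale \<i> mixer_ham)"
    by (simp add: antihermitian_def cmat_scale_def mixer_ham_def)
  ultimately show ?thesis
    using antihermitian_i_cost_ham unfolding qwoa_envelope_def by blast
qed

lemma qwoa_envelope_subset_span:
  "qwoa_envelope C \<subseteq> span (insert (cmat_scale \<i> (cost_ham C)) (level_basis C ` (range C \<times> range C)))"
    (is "_ \<subseteq> span (insert ?iH ?B)")
proof
  fix A assume "A \<in> qwoa_envelope C"
  then obtain f a where A: "antihermitian A" "A = level_matrix C f (\<lambda>x. \<i> * of_real (a * x))"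
    unfolding qwoa_envelope_def by blast
  have A_split: "A = level_matrix C f (\<lambda>_. 0) + a *\<^sub>R ?iH"
    by (simp add: A(2) cost_ham_level_matrix cmat_scale_level_matrix scaleR_level_matrix
        level_matrix_add mult.left_commute)
  have "A - a *\<^sub>R ?iH \<in> {A. antihermitian A}"
    using A(1) antihermitian_i_cost_ham
    by (intro subspace_diff subspace_scale subspace_antihermitian) auto
  then have "antihermitian (level_matrix C f (\<lambda>_. 0))"
    using A_split by simp
  then have "level_matrix C f (\<lambda>_. 0) \<in> span (insert ?iH ?B)"
    using antihermitian_block_in_span span_mono[OF subset_insertI] by blast
  then show "A \<in> span (insert ?iH ?B)"
    unfolding A_split by (simp add: span_add span_base span_scale)
qed

lemma dim_qwoa_envelope_le: "dim (qwoa_envelope C) \<le> (card (range C))\<^sup>2 + 1"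
proof -
  have "dim (qwoa_envelope C)
      \<le> card (insert (cmat_scale \<i> (cost_ham C)) (level_basis C ` (range C \<times> range C)))"
    by (rule dim_le_card[OF qwoa_envelope_subset_span]) simp
  also have "\<dots> \<le> card (level_basis C ` (range C \<times> range C)) + 1"
    by (simp add: card_insert_if)
  also have "\<dots> \<le> card (range C \<times> range C) + 1"
    using card_image_le[of "range C \<times> range C" "level_basis C"] by simp
  finally show ?thesis
    by (simp add: card_cartesian_product power2_eq_square)
qed

theorem theorem1:
  fixes C :: "'a::finite \<Rightarrow> real"
  shows "dim (qwoa_dla C) \<le> (card (range C))\<^sup>2 + 1"
proof -
  have "qwoa_dla C \<subseteq> qwoa_envelope C"
    unfolding qwoa_dla_def
    by (intro gen_real_lie_alg_least generators_in_qwoa_envelope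
        subspace_qwoa_envelope lie_closed_qwoa_envelope)
  then show ?thesis
    using dim_subset dim_qwoa_envelope_le order_trans by blast
qed

end
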